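(* Let $\mathbf{SpFibPreord}$ denote the category whose objects are spatial fibrous preorders and whose morphisms are fibrous morphisms between them, two parallel fibrous morphisms $(f,f^* )$, $(g,g^* )$ being identified whenever $f=g$. Let $\mathbf{Top}$ be the category of topological spaces and continuous maps. Define $F\colon \mathbf{SpFibPreord}\to\mathbf{Top}$ as follows. For a spatial fibrous preorder $R\xrightarrow{\partial}A\xrightarrow{p}B$, let $F$ of it be $(B,\tau)$, where for $a\in A$ we set $N(a)=\{y\in B\mid aRy\}$ and $$\mathcal{O}\in\tau \iff \forall y\in\mathcal{O}\ \exists a\in A \text{ with } p(a)=y \text{ and } N(a)\subseteq\mathcal{O}.$$ For a morphism $(f,f^* )$, set $F(f,f^* )=f$. Define $G\colon\mathbf{Top}\to\mathbf{SpFibPreord}$ as follows. For a topological space $(B,\tau)$, let $G(B,\tau)$ be the fibrous preorder with $$A=\{(U,x)\mid x\in U\in\tau\},\qquad p(U,x)=x,\qquad (U,x)Ry\iff y\in U,\qquad \partial((U,x),y)=(U,y).$$ It is spatial via $s(x)=(B,x)$ and $m((U,x),(V,x))=(U\cap V,x)$. For a continuous map $f\colon(B,\tau)\to(B',\tau')$, let $G(f)=(f,f^* )$ with $f^*((U',x'),y)=(f^{-1}(U'),y)$ whenever $x'=f(y)$. Then $F$ and $G$ are well-defined functors, $FG=1_{\mathbf{Top}}$ (that is, $F(G(B,\tau))=(B,\tau)$ for every topological space), and $GF\sim 1$: for every spatial fibrous preorder $\mathbf{A}$, $GF(\mathbf{A})$ is equivalent to $\mathbf{A}$.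
   Context: A fibrous preorder is a sequence $R\xrightarrow{\partial}A\xrightarrow{p}B$ consisting of the following data: - sets $A$ and $B$; - a map $p\colon A\to B$; - a relation $R\subseteq A\times B$ (write $aRb$ for $(a,b)\in R$); - a map $\partial\colon R\to A$. These must satisfy, for all $a\in A$ and $b,y\in B$ with $aRb$: - (F1) $p\partial(a,b)=b$; - (F2) $aRp(a)$ (this holds for all $a\in A$); - (F3) $\partial(a,b)Ry\Rightarrow aRy$. Such a fibrous preorder is called spatial if there exist maps $s\colon B\to A$ and $m\colon A\times_BA\to A$, where $A\times_BA=\{(a,a')\in A\times A\mid p(a)=p(a')\}$, such that for all $a,a'\in A$ with $p(a)=p(a')$ and all $y\in B$: - (F4) $ps(y)=y$; - (F5) $pm(a,a')=p(a)$; - (F6) $m(a,a')Ry\Rightarrow (aRy \text{ and } a'Ry)$. Spatiality is a property; $s$ and $m$ are not part of the data. Given fibrous preorders $\mathbf{A}=(R,A,B,p,\partial)$ and $\mathbf{A}'=(R',A',B',p',\partial')$, a fibrous morphism $\mathbf{A}\to\mathbf{A}'$ is a pair $(f,f^* )$ with $f\colon B\to B'$ a map and $f^*\colon A'_f\to A$ a map, where $A'_f=\{(a',b)\in A'\times B\mid p'(a')=f(b)\}$. These must satisfy, for all $(a',b)\in A'_f$ and $y\in B$: - $pf^*(a',b)=b$; - $f^*(a',b)Ry\Rightarrow a'R'f(y)$. Composition is $(g,g^* )\circ(f,f^* )=(gf,h)$ with $h(a'',b)=f^*(g^*(a'',f(b)),b)$. Two fibrous preorders $(R,A,B,p,\partial)$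 and $(R',A',B',p',\partial')$ are equivalent if $B=B'$ and the identity map $1_B$ underlies a fibrous morphism in each direction. Equivalently: $B=B'$ and there exist maps $\varphi\colon A\to A'$ and $\gamma\colon A'\to A$ with $p'\varphi=p$ and $p\gamma=p'$ such that, for all $a\in A$, $a'\in A'$ and $b\in B$, $\varphi(a)R'b\Rightarrow aRb$ and $\gamma(a')Rb\Rightarrow a'R'b$. *)

theory Defs
  imports "HOL-Analysis.Analysis"
begin

text \<open>A fibrous preorder R --d--> A --p--> B, with carriers A, B given as sets.
  The relation R is a predicate on 'a x 'b, required to be contained in A x B.\<close>
record ('a, 'b) fpo =
  Acar :: "'a set"
  Bcar :: "'b set"
  proj :: "'a \<Rightarrow> 'b"
  rel  :: "'a \<Rightarrow> 'b \<Rightarrow> bool"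
  bd   :: "'a \<Rightarrow> 'b \<Rightarrow> 'a"

definition fibrous_preorder :: "('a, 'b) fpo \<Rightarrow> bool" where
  "fibrous_preorder P \<longleftrightarrow>
     (\<forall>a\<in>Acar P. proj P a \<in> Bcar P) \<and>
     (\<forall>a b. rel P a b \<longrightarrow> a \<in> Acar P \<and> b \<in> Bcar P) \<and>
     (\<forall>a b. rel P a b \<longrightarrow> bd P a b \<in> Acar P) \<and>
     (\<forall>a b. rel P a b \<longrightarrow> proj P (bd P a b) = b) \<and>
     (\<forall>a\<in>Acar P. rel P a (proj P a)) \<and>
     (\<forall>a b y. rel P a b \<longrightarrow> y \<in> Bcar P \<longrightarrow> rel P (bd P a b) y \<longrightarrow> rel P a y)"

definition spatial :: "('a, 'b) fpo \<Rightarrow> bool" where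
  "spatial P \<longleftrightarrow> fibrous_preorder P \<and>
     (\<exists>s m.
        (\<forall>y\<in>Bcar P. s y \<in> Acar P \<and> proj P (s y) = y) \<and>
        (\<forall>a\<in>Acar P. \<forall>a'\<in>Acar P. proj P a = proj P a' \<longrightarrow>
            m a a' \<in> Acar P \<and> proj P (m a a') = proj P a \<and>
            (\<forall>y\<in>Bcar P. rel P (m a a') y \<longrightarrow> rel P a y \<and> rel P a' y)))"

text \<open>Fibrous morphism (f, fs) : P -> P'; fs is the map on A'_f, given by its values on
  pairs (a', b) with a' in A', b in B, p'(a') = f(b).\<close>
definition fib_morphism ::
  "('a, 'b) fpo \<Rightarrow> ('c, 'd) fpo \<Rightarrow> ('b \<Rightarrow> 'd) \<Rightarrow> ('c \<Rightarrow> 'b \<Rightarrow> 'a) \<Rightarrow> bool" where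
  "fib_morphism P P' f fs \<longleftrightarrow>
     (\<forall>b\<in>Bcar P. f b \<in> Bcar P') \<and>
     (\<forall>a'\<in>Acar P'. \<forall>b\<in>Bcar P. proj P' a' = f b \<longrightarrow>
        fs a' b \<in> Acar P \<and> proj P (fs a' b) = b \<and>
        (\<forall>y\<in>Bcar P. rel P (fs a' b) y \<longrightarrow> rel P' a' (f y)))"

definition fib_equiv :: "('a, 'b) fpo \<Rightarrow> ('c, 'b) fpo \<Rightarrow> bool" where
  "fib_equiv P P' \<longleftrightarrow> Bcar P = Bcar P' \<and>
     (\<exists>fs. fib_morphism P P' id fs) \<and> (\<exists>gs. fib_morphism P' P id gs)"

definition F_open :: "('a, 'b) fpo \<Rightarrow> 'b set \<Rightarrow> bool" where
  "F_open P W \<longleftrightarrow> W \<subseteq> Bcar P \<and>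
     (\<forall>y\<in>W. \<exists>a\<in>Acar P. proj P a = y \<and> {z \<in> Bcar P. rel P a z} \<subseteq> W)"

definition F_top :: "('a, 'b) fpo \<Rightarrow> 'b topology" where
  "F_top P = topology (F_open P)"

definition G_obj :: "'b topology \<Rightarrow> ('b set \<times> 'b, 'b) fpo" where
  "G_obj X = \<lparr> Acar = {(U, x). openin X U \<and> x \<in> U},
               Bcar = topspace X,
               proj = snd,
               rel = (\<lambda>(U, x) y. openin X U \<and> x \<in> U \<and> y \<in> U),
               bd = (\<lambda>(U, x) y. (U, y)) \<rparr>"

definition G_mor :: "'b topology \<Rightarrow> ('b \<Rightarrow> 'd) \<Rightarrow> ('d set \<times> 'd) \<Rightarrow> 'b \<Rightarrow> ('b set \<times> 'b)" where
  "G_mor X f = (\<lambda>(U', x') y. (f -` U' \<inter> topspace X, y))"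

end

theory Submission
  imports Defs
begin

text \<open>The F-open sets are those containing, around each of their points y, some neighbourhood
  N(a) with p(a) = y. Spatiality makes these neighbourhoods a base: s provides one at every point
  and m one inside any two at the same point. Axioms (F1) and (F3) say that N(a) is itself F-open,
  with \<partial>(a, y) witnessing this at y; so in F(P) the neighbourhoods over y are exactly a
  neighbourhood base at y, which is what G(F(P)) records up to equivalence.\<close>

definition nbhd :: "('a, 'b) fpo \<Rightarrow> 'a \<Rightarrow> 'b set" where
  "nbhd P a = {z \<in> Bcar P. rel P a z}"

lemma F_open_iff_nbhd:
  "F_open P W \<longleftrightarrow> W \<subseteq> Bcar P \<and> (\<forall>y\<in>W. \<exists>a\<in>Acar P. proj P a = y \<and> nbhd P a \<subseteq> W)"
  by (simp add: F_open_def nbhd_def)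

lemma spatial_section:
  assumes "spatial P" "y \<in> Bcar P"
  obtains a where "a \<in> Acar P" "proj P a = y"
  using assms unfolding spatial_def by blast

lemma spatial_meet:
  assumes "spatial P" "a \<in> Acar P" "a' \<in> Acar P" "proj P a = proj P a'"
  obtains c where "c \<in> Acar P" "proj P c = proj P a" "nbhd P c \<subseteq> nbhd P a \<inter> nbhd P a'"
proof -
  from \<open>spatial P\<close> obtain m where
    "\<forall>a\<in>Acar P. \<forall>a'\<in>Acar P. proj P a = proj P a' \<longrightarrow>
       m a a' \<in> Acar P \<and> proj P (m a a') = proj P a \<and>
       (\<forall>y\<in>Bcar P. rel P (m a a') y \<longrightarrow> rel P a y \<and> rel P a' y)"
    unfolding spatial_def by blast
  with assms(2-4) show thesis
    by (intro that[of "m a a'"]) (auto simp: nbhd_def)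
qed

lemma istopology_F_open:
  assumes "spatial P"
  shows "istopology (F_open P)"
  unfolding istopology_def
proof (intro conjI allI impI)
  fix S T assume S: "F_open P S" and T: "F_open P T"
  have "\<exists>c\<in>Acar P. proj P c = y \<and> nbhd P c \<subseteq> S \<inter> T" if "y \<in> S \<inter> T" for y
  proof -
    obtain a where a: "a \<in> Acar P" "proj P a = y" "nbhd P a \<subseteq> S"
      using S \<open>y \<in> S \<inter> T\<close> unfolding F_open_iff_nbhd by blast
    obtain a' where a': "a' \<in> Acar P" "proj P a' = y" "nbhd P a' \<subseteq> T"
      using T \<open>y \<in> S \<inter> T\<close> unfolding F_open_iff_nbhd by blast
    have "proj P a = proj P a'" using a(2) a'(2) by simp
    then obtain c where "c \<in> Acar P" "proj P c = proj P a" "nbhd P c \<subseteq> nbhd P a \<inter> nbhd P a'"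
      by (rule spatial_meet[OF assms a(1) a'(1)])
    with a a' show ?thesis by blast
  qed
  moreover have "S \<inter> T \<subseteq> Bcar P"
    using S by (auto simp: F_open_def)
  ultimately show "F_open P (S \<inter> T)" unfolding F_open_iff_nbhd by blast
next
  fix K assume K: "\<forall>W\<in>K. F_open P W"
  show "F_open P (\<Union>K)"
    unfolding F_open_iff_nbhd
  proof (intro conjI ballI)
    show "\<Union>K \<subseteq> Bcar P" using K by (auto simp: F_open_def)
    fix y assume "y \<in> \<Union>K"
    then obtain W where "W \<in> K" "y \<in> W" by blast
    with K obtain a where "a \<in> Acar P" "proj P a = y" "nbhd P a \<subseteq> W"
      unfolding F_open_iff_nbhd by blast
    with \<open>W \<in> K\<close> show "\<exists>a\<in>Acar P. proj P a = y \<and> nbhd P a \<subseteq> \<Union>K" by blast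
  qed
qed

lemma openin_F_top: "spatial P \<Longrightarrow> openin (F_top P) = F_open P"
  by (simp add: F_top_def istopology_F_open)

lemma topspace_F_top:
  assumes "spatial P"
  shows "topspace (F_top P) = Bcar P"
proof -
  have "F_open P (Bcar P)"
    unfolding F_open_iff_nbhd using spatial_section[OF assms] by (auto simp: nbhd_def)
  moreover have "W \<subseteq> Bcar P" if "F_open P W" for W
    using that by (simp add: F_open_def)
  ultimately show ?thesis
    unfolding topspace_def openin_F_top[OF assms] by blast
qed

text \<open>The lift fs(a', y) of a neighbourhood a' of f(y) has f(N(fs(a', y))) \<subseteq> N(a').\<close>
lemma continuous_map_F_top:
  assumes "spatial P" "spatial P'" and f: "fib_morphism P P' f fs"
  shows "continuous_map (F_top P) (F_top P') f"
  unfolding continuous_map topspace_F_top[OF assms(1)] topspace_F_top[OF assms(2)]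
    openin_F_top[OF assms(1)] openin_F_top[OF assms(2)]
proof (intro conjI allI impI)
  show f_into: "f ` Bcar P \<subseteq> Bcar P'"
    using f unfolding fib_morphism_def by blast
  fix W assume W: "F_open P' W"
  have "\<exists>a\<in>Acar P. proj P a = y \<and> nbhd P a \<subseteq> {x \<in> Bcar P. f x \<in> W}"
    if y: "y \<in> Bcar P" "f y \<in> W" for y
  proof -
    obtain a' where a': "a' \<in> Acar P'" "proj P' a' = f y" "nbhd P' a' \<subseteq> W"
      using W y(2) by (auto simp: F_open_iff_nbhd)
    then have "fs a' y \<in> Acar P" "proj P (fs a' y) = y"
      "\<forall>z\<in>Bcar P. rel P (fs a' y) z \<longrightarrow> rel P' a' (f z)"
      using f y(1) unfolding fib_morphism_def by blast+
    with a'(3) f_into show ?thesis by (auto simp: nbhd_def)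
  qed
  then show "F_open P {x \<in> Bcar P. f x \<in> W}" by (auto simp: F_open_iff_nbhd)
qed

lemma fibrous_preorder_G_obj: "fibrous_preorder (G_obj X)"
  using openin_subset by (fastforce simp: fibrous_preorder_def G_obj_def)

lemma spatial_G_obj: "spatial (G_obj X)"
  unfolding spatial_def
  by (intro conjI fibrous_preorder_G_obj exI[of _ "\<lambda>y. (topspace X, y)"]
        exI[of _ "\<lambda>(U, x) (V, _). (U \<inter> V, x)"])
     (auto simp: G_obj_def)

lemma fib_morphism_G_mor:
  assumes "continuous_map X Y f"
  shows "fib_morphism (G_obj X) (G_obj Y) f (G_mor X f)"
  using assms unfolding fib_morphism_def G_obj_def G_mor_def continuous_map
  by (auto simp: Int_def conj_commute)

lemma F_open_G_obj_iff: "F_open (G_obj X) W \<longleftrightarrow> openin X W"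
proof
  assume W: "F_open (G_obj X) W"
  have "\<exists>U. openin X U \<and> y \<in> U \<and> U \<subseteq> W" if "y \<in> W" for y
  proof -
    obtain U where "openin X U" "y \<in> U" "nbhd (G_obj X) (U, y) \<subseteq> W"
      using W \<open>y \<in> W\<close> by (force simp: F_open_iff_nbhd G_obj_def)
    moreover have "nbhd (G_obj X) (U, y) = U"
      using \<open>openin X U\<close> \<open>y \<in> U\<close> openin_subset by (force simp: nbhd_def G_obj_def)
    ultimately show ?thesis by auto
  qed
  then show "openin X W" using openin_subopen by blast
next
  assume "openin X W"
  then show "F_open (G_obj X) W"
    using openin_subset by (fastforce simp: F_open_def G_obj_def)
qed

lemma F_top_G_obj: "F_top (G_obj X) = X"
  unfolding F_top_def F_open_G_obj_iff by (simp add: openin_inverse)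

lemma F_open_nbhd:
  assumes "fibrous_preorder P"
  shows "F_open P (nbhd P a)"
  unfolding F_open_iff_nbhd
proof (intro conjI ballI)
  fix y assume "y \<in> nbhd P a"
  then have "rel P a y" by (simp add: nbhd_def)
  with assms have "bd P a y \<in> Acar P" "proj P (bd P a y) = y"
    "\<forall>z\<in>Bcar P. rel P (bd P a y) z \<longrightarrow> rel P a z"
    unfolding fibrous_preorder_def by blast+
  then have "bd P a y \<in> Acar P" "proj P (bd P a y) = y" "nbhd P (bd P a y) \<subseteq> nbhd P a"
    by (auto simp: nbhd_def)
  then show "\<exists>c\<in>Acar P. proj P c = y \<and> nbhd P c \<subseteq> nbhd P a" by blast
qed (simp add: nbhd_def)

lemma proj_in_nbhd:
  assumes "fibrous_preorder P" "a \<in> Acar P"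
  shows "proj P a \<in> nbhd P a"
  using assms by (simp add: fibrous_preorder_def nbhd_def)

lemma fib_morphism_from_G_F_top:
  assumes "spatial P"
  shows "fib_morphism (G_obj (F_top P)) P id (\<lambda>a y. (nbhd P a, y))"
proof -
  have fp: "fibrous_preorder P" using assms by (simp add: spatial_def)
  have "(nbhd P a, proj P a) \<in> Acar (G_obj (F_top P))" if "a \<in> Acar P" for a
    using F_open_nbhd[OF fp] proj_in_nbhd[OF fp that]
    by (simp add: G_obj_def openin_F_top[OF assms])
  then show ?thesis
    unfolding fib_morphism_def
    by (auto simp: G_obj_def nbhd_def topspace_F_top[OF assms])
qed

lemma ex_fib_morphism_to_G_F_top:
  assumes "spatial P"
  shows "\<exists>gs. fib_morphism P (G_obj (F_top P)) id gs"
proof -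
  define g where "g U y = (SOME a. a \<in> Acar P \<and> proj P a = y \<and> nbhd P a \<subseteq> U)" for U y
  have g: "g U y \<in> Acar P \<and> proj P (g U y) = y \<and> nbhd P (g U y) \<subseteq> U"
    if "F_open P U" "y \<in> U" for U y
  proof -
    have "\<exists>a. a \<in> Acar P \<and> proj P a = y \<and> nbhd P a \<subseteq> U"
      using that unfolding F_open_iff_nbhd by blast
    then show ?thesis unfolding g_def by (rule someI_ex)
  qed
  have "fib_morphism P (G_obj (F_top P)) id (\<lambda>Ux y. g (fst Ux) y)"
    unfolding fib_morphism_def
  proof (rule conjI; intro ballI impI)
    fix y assume "y \<in> Bcar P"
    then show "id y \<in> Bcar (G_obj (F_top P))"
      by (simp add: G_obj_def topspace_F_top[OF assms])
  next
    fix Ux y assume "Ux \<in> Acar (G_obj (F_top P))" "y \<in> Bcar P"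
      "proj (G_obj (F_top P)) Ux = id y"
    then obtain U where U: "Ux = (U, y)" "F_open P U" "y \<in> U"
      by (auto simp: G_obj_def openin_F_top[OF assms])
    with g[OF U(2,3)] show "g (fst Ux) y \<in> Acar P \<and> proj P (g (fst Ux) y) = y \<and>
        (\<forall>z\<in>Bcar P. rel P (g (fst Ux) y) z \<longrightarrow> rel (G_obj (F_top P)) Ux (id z))"
      by (auto simp: G_obj_def nbhd_def openin_F_top[OF assms])
  qed
  then show ?thesis by blast
qed

lemma fib_equiv_G_F_top:
  assumes "spatial P"
  shows "fib_equiv (G_obj (F_top P)) P"
proof -
  have "Bcar (G_obj (F_top P)) = Bcar P"
    by (simp add: G_obj_def topspace_F_top[OF assms])
  then show ?thesis
    unfolding fib_equiv_def
    using fib_morphism_from_G_F_top[OF assms] ex_fib_morphism_to_G_F_top[OF assms] by blast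
qed

theorem mainTheorem1:
  shows
  \<comment> \<open>F well-defined on objects\<close>
  "(\<forall>P :: ('a, 'b) fpo. spatial P \<longrightarrow>
       istopology (F_open P) \<and> topspace (F_top P) = Bcar P)
   \<and> \<comment> \<open>F well-defined on morphisms\<close>
   (\<forall>(P :: ('a, 'b) fpo) (P' :: ('c, 'd) fpo) f fs.
       spatial P \<longrightarrow> spatial P' \<longrightarrow> fib_morphism P P' f fs \<longrightarrow>
       continuous_map (F_top P) (F_top P') f)
   \<and> \<comment> \<open>G well-defined on objects\<close>
   (\<forall>X :: 'b topology. spatial (G_obj X))
   \<and> \<comment> \<open>G well-defined on morphisms\<close>
   (\<forall>(X :: 'b topology) (Y :: 'd topology) f.
       continuous_map X Y f \<longrightarrow> fib_morphism (G_obj X) (G_obj Y) f (G_mor X f))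
   \<and> \<comment> \<open>FG = 1\<close>
   (\<forall>X :: 'b topology. F_top (G_obj X) = X)
   \<and> \<comment> \<open>GF ~ 1\<close>
   (\<forall>P :: ('a, 'b) fpo. spatial P \<longrightarrow> fib_equiv (G_obj (F_top P)) P)"
  using istopology_F_open topspace_F_top continuous_map_F_top spatial_G_obj
    fib_morphism_G_mor F_top_G_obj fib_equiv_G_F_top
  by blast

end
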